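(* Let $(\mathcal S,E)$ be an information structure, $Q$ an adapted probability functor, $\alpha>0$, and let $f$ be a $1$-cocycle in $Z^1(\mathcal S,F_\alpha(Q))$. Then (1) $f[\mathbf 1]\equiv0$; and (2) for every $X\in\mathrm{Ob}\,\mathcal S$ and every $x\in E_X$ such that the Dirac law $\delta_x$ belongs to $Q_X$, $f[X](\delta_x)=0$.
   Context: An information structure is a pair $(\mathcal S,E)$: $\mathcal S$ a small poset category with terminal object $\mathbf 1$ and finite-dimensional nerve, in which the product $XY:=X\wedge Y$ exists whenever $X$ and $Y$ have a common refinement, and $E:\mathcal S\to\mathcal{Sets}$ a functor ($E_X:=E(X)$) with $E(\mathbf 1)$ a singleton, $E(\pi)$ a strict surjection for non-identity arrows, $|E(\pi)^{-1}(x)\cap E(\sigma)^{-1}(y)|\le1$ for product diagrams $X\xleftarrow{\pi}X\wedge Y\xrightarrow{\sigma}Y$, and every $x\in E(X)$ the $X$-component of an element of $\lim E$. $\mathcal S_X=\{Y:X\to Y\}$. A probability functor $Q$ gives a simplicial subcomplex $Q_X$ of the simplex of laws on $E_X$ for each $X$, with marginalizations $\pi_*$; $P(Y=y):=\pi_*P(y)$; conditional laws $P|_{Y=y}$; $Q$ adapted = stable under conditioning. $F_\alpha(Q_X)$: measurable functions on $Q_X$ with action $(Y.f)(P)=\sum_{y\in E_Y}P(Y=y)^\alpha f(P|_{Y=y})$ (zero summands when $P(Y=y)=0$). A $1$-cochain is a family of measurable functions $f_X[Y]$ on $Q_X$ for $Y\in\mathcal S_X$, with $f_X[Y](P)=f_Y[Y](Y_*P)$;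 one writes $f[Y]$. It is a $1$-cocycle if for all $X$ and $Y,Z\in\mathcal S_X$: $Y.f[Z]-f[YZ]+f[Y]=0$ as functions on $Q_X$. *)

theory Defs
  imports "HOL-Analysis.Analysis"
begin

(* Objects of the poset category S are the elements of type 'o; le X Y means
   there is an arrow X -> Y (Y is coarser than X).  E X :: 'e set is the value
   set E_X, and proj X Y :: 'e => 'e is E(X -> Y) (only meaningful on E X).  *)

definition is_glb :: "('o \<Rightarrow> 'o \<Rightarrow> bool) \<Rightarrow> 'o \<Rightarrow> 'o \<Rightarrow> 'o \<Rightarrow> bool" where
  "is_glb le W X Y \<longleftrightarrow> le W X \<and> le W Y \<and> (\<forall>Z. le Z X \<and> le Z Y \<longrightarrow> le Z W)"

(* the product XY = X \<and> Y (meaningful when X, Y have a common refinement) *)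
definition meet :: "('o \<Rightarrow> 'o \<Rightarrow> bool) \<Rightarrow> 'o \<Rightarrow> 'o \<Rightarrow> 'o" where
  "meet le X Y = (THE W. is_glb le W X Y)"

definition info_structure ::
  "('o \<Rightarrow> 'o \<Rightarrow> bool) \<Rightarrow> 'o \<Rightarrow> ('o \<Rightarrow> 'e set) \<Rightarrow> ('o \<Rightarrow> 'o \<Rightarrow> 'e \<Rightarrow> 'e) \<Rightarrow> bool" where
  "info_structure le one E proj \<longleftrightarrow>
     \<comment> \<open>poset category\<close>
     (\<forall>X. le X X) \<and> (\<forall>X Y Z. le X Y \<longrightarrow> le Y Z \<longrightarrow> le X Z) \<and>
     (\<forall>X Y. le X Y \<longrightarrow> le Y X \<longrightarrow> X = Y) \<and>
     \<comment> \<open>terminal object\<close>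
     (\<forall>X. le X one) \<and>
     \<comment> \<open>finite-dimensional nerve: strict chains have bounded length\<close>
     (\<exists>n. \<forall>xs. sorted_wrt (\<lambda>A B. le A B \<and> A \<noteq> B) xs \<longrightarrow> length xs \<le> n) \<and>
     \<comment> \<open>products exist whenever a common refinement exists\<close>
     (\<forall>X Y. (\<exists>Z. le Z X \<and> le Z Y) \<longrightarrow> (\<exists>W. is_glb le W X Y)) \<and>
     \<comment> \<open>E is a functor into finite sets\<close>
     (\<forall>X. finite (E X)) \<and>
     (\<forall>X Y. le X Y \<longrightarrow> proj X Y ` E X \<subseteq> E Y) \<and>
     (\<forall>X. \<forall>x\<in>E X. proj X X x = x) \<and>
     (\<forall>X Y Z. le X Y \<longrightarrow> le Y Z \<longrightarrow> (\<forall>x\<in>E X. proj Y Z (proj X Y x) = proj X Z x)) \<and>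
     \<comment> \<open>E(1) is a singleton\<close>
     (\<exists>a. E one = {a}) \<and>
     \<comment> \<open>strict surjections for non-identity arrows\<close>
     (\<forall>X Y. le X Y \<longrightarrow> X \<noteq> Y \<longrightarrow> proj X Y ` E X = E Y \<and> \<not> inj_on (proj X Y) (E X)) \<and>
     \<comment> \<open>product condition\<close>
     (\<forall>X Y. (\<exists>Z. le Z X \<and> le Z Y) \<longrightarrow>
        (\<forall>x y. card {z \<in> E (meet le X Y). proj (meet le X Y) X z = x \<and> proj (meet le X Y) Y z = y} \<le> 1)) \<and>
     \<comment> \<open>every x in E X is the X-component of an element of lim E\<close>
     (\<forall>X. \<forall>x\<in>E X. \<exists>s. (\<forall>Z. s Z \<in> E Z) \<and> (\<forall>Z W. le Z W \<longrightarrow> proj Z W (s Z) = s W) \<and> s X = x)"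

definition law :: "'e set \<Rightarrow> ('e \<Rightarrow> real) \<Rightarrow> bool" where
  "law A P \<longleftrightarrow> (\<forall>x. 0 \<le> P x) \<and> (\<forall>x. x \<notin> A \<longrightarrow> P x = 0) \<and> (\<Sum>x\<in>A. P x) = 1"

definition marg :: "('o \<Rightarrow> 'e set) \<Rightarrow> ('o \<Rightarrow> 'o \<Rightarrow> 'e \<Rightarrow> 'e) \<Rightarrow> 'o \<Rightarrow> 'o \<Rightarrow> ('e \<Rightarrow> real) \<Rightarrow> 'e \<Rightarrow> real" where
  "marg E proj X Y P y = (\<Sum>x\<in>{x \<in> E X. proj X Y x = y}. P x)"

definition cond :: "('o \<Rightarrow> 'e set) \<Rightarrow> ('o \<Rightarrow> 'o \<Rightarrow> 'e \<Rightarrow> 'e) \<Rightarrow> 'o \<Rightarrow> 'o \<Rightarrow> ('e \<Rightarrow> real) \<Rightarrow> 'e \<Rightarrow> 'e \<Rightarrow> real" where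
  "cond E proj X Y P y = (\<lambda>x. if x \<in> E X \<and> proj X Y x = y then P x / marg E proj X Y P y else 0)"

(* Q is a probability functor: each Q X is (the realization of) a simplicial
   subcomplex of the simplex of laws on E X, stable under marginalizations *)
definition prob_functor ::
  "('o \<Rightarrow> 'o \<Rightarrow> bool) \<Rightarrow> ('o \<Rightarrow> 'e set) \<Rightarrow> ('o \<Rightarrow> 'o \<Rightarrow> 'e \<Rightarrow> 'e) \<Rightarrow> ('o \<Rightarrow> ('e \<Rightarrow> real) set) \<Rightarrow> bool" where
  "prob_functor le E proj Q \<longleftrightarrow>
     (\<forall>X. \<exists>K. K \<subseteq> Pow (E X) \<and> (\<forall>\<sigma>\<in>K. \<forall>\<tau>. \<tau> \<subseteq> \<sigma> \<longrightarrow> \<tau> \<in> K) \<and>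
           Q X = {P. law (E X) P \<and> {x \<in> E X. P x \<noteq> 0} \<in> K}) \<and>
     (\<forall>X Y. le X Y \<longrightarrow> (\<forall>P\<in>Q X. marg E proj X Y P \<in> Q Y))"

definition adapted ::
  "('o \<Rightarrow> 'o \<Rightarrow> bool) \<Rightarrow> ('o \<Rightarrow> 'e set) \<Rightarrow> ('o \<Rightarrow> 'o \<Rightarrow> 'e \<Rightarrow> 'e) \<Rightarrow> ('o \<Rightarrow> ('e \<Rightarrow> real) set) \<Rightarrow> bool" where
  "adapted le E proj Q \<longleftrightarrow>
     (\<forall>X Y P y. le X Y \<longrightarrow> P \<in> Q X \<longrightarrow> y \<in> E Y \<longrightarrow> marg E proj X Y P y \<noteq> 0 \<longrightarrow>
        cond E proj X Y P y \<in> Q X)"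

definition act :: "('o \<Rightarrow> 'e set) \<Rightarrow> ('o \<Rightarrow> 'o \<Rightarrow> 'e \<Rightarrow> 'e) \<Rightarrow> real \<Rightarrow> 'o \<Rightarrow> 'o \<Rightarrow>
     (('e \<Rightarrow> real) \<Rightarrow> real) \<Rightarrow> ('e \<Rightarrow> real) \<Rightarrow> real" where
  "act E proj \<alpha> X Y g P =
     (\<Sum>y\<in>E Y. if marg E proj X Y P y = 0 then 0
               else marg E proj X Y P y powr \<alpha> * g (cond E proj X Y P y))"

(* f X Y is f_X[Y], a measurable function on Q_X *)
definition cochain1 ::
  "('o \<Rightarrow> 'o \<Rightarrow> bool) \<Rightarrow> ('o \<Rightarrow> 'e set) \<Rightarrow> ('o \<Rightarrow> 'o \<Rightarrow> 'e \<Rightarrow> 'e) \<Rightarrow> ('o \<Rightarrow> ('e \<Rightarrow> real) set) \<Rightarrow>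
     ('o \<Rightarrow> 'o \<Rightarrow> ('e \<Rightarrow> real) \<Rightarrow> real) \<Rightarrow> bool" where
  "cochain1 le E proj Q f \<longleftrightarrow>
     (\<forall>X Y. le X Y \<longrightarrow> f X Y \<in> borel_measurable (restrict_space borel (Q X))) \<and>
     (\<forall>X Y. le X Y \<longrightarrow> (\<forall>P\<in>Q X. f X Y P = f Y Y (marg E proj X Y P)))"

definition cocycle1 ::
  "('o \<Rightarrow> 'o \<Rightarrow> bool) \<Rightarrow> ('o \<Rightarrow> 'e set) \<Rightarrow> ('o \<Rightarrow> 'o \<Rightarrow> 'e \<Rightarrow> 'e) \<Rightarrow> ('o \<Rightarrow> ('e \<Rightarrow> real) set) \<Rightarrow> real \<Rightarrow>
     ('o \<Rightarrow> 'o \<Rightarrow> ('e \<Rightarrow> real) \<Rightarrow> real) \<Rightarrow> bool" where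
  "cocycle1 le E proj Q \<alpha> f \<longleftrightarrow> cochain1 le E proj Q f \<and>
     (\<forall>X Y Z. le X Y \<longrightarrow> le X Z \<longrightarrow> (\<forall>P\<in>Q X.
        act E proj \<alpha> X Y (f X Z) P - f X (meet le Y Z) P + f X Y P = 0))"

definition dirac :: "'e \<Rightarrow> 'e \<Rightarrow> real" where
  "dirac x = (\<lambda>y. if y = x then 1 else 0)"

end

theory Submission
  imports Defs
begin

(* Setting Y = Z in the cocycle identity and using YY = Y gives Y.f[Y] = 0.
   The action of Y is the identity on every law carried by a single fibre of Y,
   because conditioning on that fibre changes nothing and all other fibres have
   mass zero.  Every law on E_X is carried by the unique fibre of X -> 1, and
   the Dirac law at x by the fibre {x} of the identity X -> X; in both cases
   f[Y](P) = Y.f[Y](P) = 0. *)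

lemma meet_refl:
  assumes refl: "le X X" and antisym: "\<And>W. le W X \<Longrightarrow> le X W \<Longrightarrow> W = X"
  shows "meet le X X = X"
  unfolding meet_def
proof (rule the_equality)
  show "is_glb le X X X" unfolding is_glb_def using refl by simp
next
  fix W assume "is_glb le W X X"
  then have "le W X" and "le X W" unfolding is_glb_def using refl by auto
  then show "W = X" by (rule antisym)
qed

lemma info_structure_le_refl: "info_structure le one E proj \<Longrightarrow> le X X"
  unfolding info_structure_def by (elim conjE) fast

lemma info_structure_le_antisym:
  "info_structure le one E proj \<Longrightarrow> le X Y \<Longrightarrow> le Y X \<Longrightarrow> X = Y"
  unfolding info_structure_def by (elim conjE) fast

lemma info_structure_le_one: "info_structure le one E proj \<Longrightarrow> le X one"
  unfolding info_structure_def by (elim conjE) fast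

lemma info_structure_finite: "info_structure le one E proj \<Longrightarrow> finite (E X)"
  unfolding info_structure_def by (elim conjE) fast

lemma info_structure_singleton_one: "info_structure le one E proj \<Longrightarrow> \<exists>a. E one = {a}"
  unfolding info_structure_def by (elim conjE) fast

lemma info_structure_proj_mem:
  "info_structure le one E proj \<Longrightarrow> le X Y \<Longrightarrow> x \<in> E X \<Longrightarrow> proj X Y x \<in> E Y"
  unfolding info_structure_def by (elim conjE) fast

lemma info_structure_proj_id:
  "info_structure le one E proj \<Longrightarrow> x \<in> E X \<Longrightarrow> proj X X x = x"
  unfolding info_structure_def by (elim conjE) fast

lemma info_structure_meet_refl:
  assumes "info_structure le one E proj"
  shows "meet le X X = X"
  by (rule meet_refl[OF info_structure_le_refl[OF assms] info_structure_le_antisym[OF assms]])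

lemma prob_functor_law:
  assumes "prob_functor le E proj Q" and "P \<in> Q X"
  shows "law (E X) P"
proof -
  have "\<exists>K. K \<subseteq> Pow (E X) \<and> (\<forall>\<sigma>\<in>K. \<forall>\<tau>. \<tau> \<subseteq> \<sigma> \<longrightarrow> \<tau> \<in> K) \<and>
      Q X = {P. law (E X) P \<and> {x \<in> E X. P x \<noteq> 0} \<in> K}"
    using conjunct1[OF assms(1)[unfolded prob_functor_def]] by (rule spec)
  then obtain K where "Q X = {P. law (E X) P \<and> {x \<in> E X. P x \<noteq> 0} \<in> K}"
    by (elim exE conjE)
  with assms(2) show ?thesis by simp
qed

lemma cocycle1_act_self:
  assumes "cocycle1 le E proj Q \<alpha> f" and "meet le Y Y = Y" and "le X Y" and "P \<in> Q X"
  shows "act E proj \<alpha> X Y (f X Y) P = 0"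
proof -
  have "\<forall>X Y Z. le X Y \<longrightarrow> le X Z \<longrightarrow> (\<forall>P\<in>Q X.
      act E proj \<alpha> X Y (f X Z) P - f X (meet le Y Z) P + f X Y P = 0)"
    using assms(1) unfolding cocycle1_def by (rule conjunct2)
  then have "act E proj \<alpha> X Y (f X Y) P - f X (meet le Y Y) P + f X Y P = 0"
    using assms(3,4) by blast
  with assms(2) show ?thesis by simp
qed

lemma law_vanishes_off_full_fibre:
  assumes "law (E X) P" and "finite (E X)" and "marg E proj X Y P y = 1"
    and "x \<in> E X" and "proj X Y x \<noteq> y"
  shows "P x = 0"
proof -
  let ?F = "{x \<in> E X. proj X Y x = y}"
  have "(\<Sum>x\<in>E X. P x) = (\<Sum>x\<in>E X - ?F. P x) + (\<Sum>x\<in>?F. P x)"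
    using assms(2) by (intro sum.subset_diff) auto
  then have "(\<Sum>x\<in>E X - ?F. P x) = 0"
    using assms(1,3) unfolding law_def marg_def by simp
  moreover have "x \<in> E X - ?F" using assms(4,5) by simp
  ultimately show "P x = 0"
    using assms(1,2) unfolding law_def by (simp add: sum_nonneg_eq_0_iff)
qed

lemma act_law_on_one_fibre:
  assumes "law (E X) P" and "finite (E X)" and "finite (E Y)"
    and "y \<in> E Y" and "marg E proj X Y P y = 1"
  shows "act E proj \<alpha> X Y g P = g P"
proof -
  have off: "P x = 0" if "x \<in> E X" "proj X Y x \<noteq> y" for x
    using law_vanishes_off_full_fibre[OF assms(1,2,5) that] .
  have other_fibres: "marg E proj X Y P y' = 0" if "y' \<noteq> y" for y'
    unfolding marg_def using off that by (intro sum.neutral) auto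
  have "cond E proj X Y P y = P"
    using assms(1,5) off unfolding cond_def law_def by (auto simp: fun_eq_iff)
  then have "act E proj \<alpha> X Y g P = (\<Sum>y'\<in>E Y. if y' = y then g P else 0)"
    unfolding act_def using other_fibres assms(5) by (intro sum.cong) auto
  also have "\<dots> = g P" using assms(3,4) by simp
  finally show ?thesis .
qed

theorem proposition4p7:
  fixes le :: "'o \<Rightarrow> 'o \<Rightarrow> bool" and one :: 'o and E :: "'o \<Rightarrow> 'e set"
    and proj :: "'o \<Rightarrow> 'o \<Rightarrow> 'e \<Rightarrow> 'e" and Q :: "'o \<Rightarrow> ('e \<Rightarrow> real) set"
    and \<alpha> :: real and f :: "'o \<Rightarrow> 'o \<Rightarrow> ('e \<Rightarrow> real) \<Rightarrow> real"
  assumes "info_structure le one E proj"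
    and "prob_functor le E proj Q"
    and "adapted le E proj Q"
    and "\<alpha> > 0"
    and "cocycle1 le E proj Q \<alpha> f"
  shows "(\<forall>X. \<forall>P\<in>Q X. f X one P = 0) \<and>
         (\<forall>X. \<forall>x\<in>E X. dirac x \<in> Q X \<longrightarrow> f X X (dirac x) = 0)"
proof (intro conjI allI ballI impI)
  have self_zero: "act E proj \<alpha> X Y (f X Y) P = 0" if "le X Y" "P \<in> Q X" for X Y P
    using cocycle1_act_self[OF assms(5) info_structure_meet_refl[OF assms(1)] that] .
  note fin = info_structure_finite[OF assms(1)]
  fix X
  show "f X one P = 0" if P: "P \<in> Q X" for P
  proof -
    obtain a where a: "E one = {a}" using info_structure_singleton_one[OF assms(1)] by blast
    have to_a: "proj X one x = a" if "x \<in> E X" for x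
      using info_structure_proj_mem[OF assms(1) info_structure_le_one[OF assms(1)] that] a by simp
    have law: "law (E X) P" using prob_functor_law[OF assms(2) P] .
    moreover have "{x \<in> E X. proj X one x = a} = E X" using to_a by blast
    ultimately have "marg E proj X one P a = 1" unfolding marg_def law_def by simp
    then have "act E proj \<alpha> X one (f X one) P = f X one P"
      using act_law_on_one_fibre[of E X P one a, OF law fin fin] a by simp
    with self_zero[OF info_structure_le_one[OF assms(1)] P] show ?thesis by simp
  qed
  show "f X X (dirac x) = 0" if x: "x \<in> E X" and D: "dirac x \<in> Q X" for x
  proof -
    have "{z \<in> E X. proj X X z = x} = {x}"
      using x info_structure_proj_id[OF assms(1)] by auto
    then have "marg E proj X X (dirac x) x = 1" unfolding marg_def dirac_def by simp
    then have "act E proj \<alpha> X X (f X X) (dirac x) = f X X (dirac x)"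
      using act_law_on_one_fibre[of E X "dirac x" X x, OF prob_functor_law[OF assms(2) D] fin fin x] by simp
    with self_zero[OF info_structure_le_refl[OF assms(1)] D] show ?thesis by simp
  qed
qed

end
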